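(* $MR(3) = 4$; that is, every extremal point of $\Gamma(3)$ has rank at most $4$, and there exists an extremal point of $\Gamma(3)$ of rank exactly $4$.
   Context: A state $\rho$ on $M_n(\mathbb{C}) \otimes M_n(\mathbb{C})$ is a marginal tracial state if $\rho(A\otimes I) = \mathrm{tr}(A)$ and $\rho(I \otimes B) = \mathrm{tr}(B)$ for all $A,B \in M_n(\mathbb{C})$, where $\mathrm{tr}$ is the normalized trace. $\Gamma(n)$ is the convex set of all marginal tracial states on $M_n(\mathbb{C}) \otimes M_n(\mathbb{C})$. For a state $\rho$, $\mathrm{rank}(\rho)$ is the rank of its density matrix. $MR(n)$ denotes the maximum of $\mathrm{rank}(\rho)$ over all extremal points $\rho$ of $\Gamma(n)$. *)

theory Defs
  imports "HOL-Analysis.Analysis" "HOL-Library.Numeral_Type"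
begin

text \<open>M_n(C) tensor M_n(C) is identified with M_{n^2}(C), indexed by pairs 'n \<times> 'n,
  and the tensor product of matrices is the Kronecker product.\<close>

definition kron :: "complex^'n^'n \<Rightarrow> complex^'n^'n \<Rightarrow> complex^('n\<times>'n)^('n\<times>'n)" where
  "kron A B = (\<chi> p q. A $ fst p $ fst q * B $ snd p $ snd q)"

definition ntr :: "complex^'n^'n \<Rightarrow> complex" where
  "ntr A = trace A / of_nat CARD('n)"

text \<open>Density matrices: Hermitian, positive semidefinite, trace one.
  A state rho corresponds to its density matrix D via rho(X) = trace (D ** X).\<close>
definition density_matrix :: "complex^'m^'m \<Rightarrow> bool" where
  "density_matrix D \<longleftrightarrow>
     (\<forall>i j. D $ j $ i = cnj (D $ i $ j)) \<and>
     (\<forall>x::complex^'m. 0 \<le> Re (\<Sum>i\<in>UNIV. \<Sum>j\<in>UNIV. cnj (x $ i) * D $ i $ j * x $ j)) \<and>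
     trace D = 1"

definition Gamma :: "(complex^('n::finite\<times>'n)^('n\<times>'n)) set" where
  "Gamma = {D. density_matrix D \<and>
     (\<forall>A::complex^'n^'n. trace (D ** kron A (mat 1)) = ntr A) \<and>
     (\<forall>B::complex^'n^'n. trace (D ** kron (mat 1) B) = ntr B)}"

end

theory Submission
  imports Defs
begin

text \<open>
  States are handled through their density matrices, and the marginal conditions say
  exactly that both partial traces equal (1/n) I (lemma Gamma_iff).  Two general
  criteria for extremality are then proved:
  (1) if a nonzero Hermitian H with vanishing partial traces satisfies
      |<x, H x>| <= C <x, D x>, then D +- c H stay in Gamma, so D is not extreme;
  (2) if every Hermitian H that kills a set of kernel vectors of D and has vanishing
      partial traces is zero, then D is extreme.
  Upper bound: if D has r independent rows, the matrices H = D K D with K Hermitian of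
  size r (a real space of dimension r^2) satisfy the estimate of (1); when r^2 > 2 n^2,
  the 2 n^2 real partial-trace conditions must have a nonzero common solution, so D is
  not extreme.  For n = 3 and r = 5 this gives rank <= 4.
  Lower bound: an explicit matrix Dex in Gamma(3) with four independent rows satisfies
  the hypothesis of (2), which reduces to a small homogeneous linear system.
\<close>

definition sesq :: "complex^'m^'m \<Rightarrow> complex^'m \<Rightarrow> complex^'m \<Rightarrow> complex" where
  "sesq D x y = (\<Sum>i\<in>UNIV. \<Sum>j\<in>UNIV. cnj (x$i) * D$i$j * y$j)"

definition hermitian :: "complex^'m^'m \<Rightarrow> bool" where
  "hermitian D \<longleftrightarrow> (\<forall>i j. D $ j $ i = cnj (D $ i $ j))"

lemma hermitian_cnj: "hermitian D \<Longrightarrow> cnj (D$i$j) = D$j$i"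
  unfolding hermitian_def by metis

lemma density_matrix_iff:
  "density_matrix D \<longleftrightarrow> hermitian D \<and> (\<forall>x. 0 \<le> Re (sesq D x x)) \<and> trace D = 1"
  by (simp add: density_matrix_def hermitian_def sesq_def)

lemma scaleR_complex: "(r::real) *\<^sub>R (z::complex) = of_real r * z"
  by (simp add: scaleR_conv_of_real)

lemma sesq_add_left: "sesq D (x + y) z = sesq D x z + sesq D y z"
  and sesq_add_right: "sesq D z (x + y) = sesq D z x + sesq D z y"
  and sesq_scale_left: "sesq D (c *s x) z = cnj c * sesq D x z"
  and sesq_scale_right: "sesq D z (c *s x) = c * sesq D z x"
  and sesq_add_matrix: "sesq (D + H) x y = sesq D x y + sesq H x y"
  and sesq_scale_matrix: "sesq (r *\<^sub>R H) x y = of_real r * sesq H x y"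
  by (simp_all add: sesq_def algebra_simps sum.distrib sum_distrib_left scaleR_complex)

lemma sesq_swap: assumes "hermitian D" shows "sesq D y x = cnj (sesq D x y)"
proof -
  have "sesq D y x = (\<Sum>j\<in>UNIV. \<Sum>i\<in>UNIV. cnj (y$j) * D$j$i * x$i)" by (simp add: sesq_def)
  also have "\<dots> = (\<Sum>i\<in>UNIV. \<Sum>j\<in>UNIV. cnj (y$j) * D$j$i * x$i)" by (rule sum.swap)
  also have "\<dots> = cnj (sesq D x y)" using assms
    by (simp add: sesq_def hermitian_cnj mult.commute mult.left_commute)
  finally show ?thesis .
qed

lemma sesq_mult_vector: "sesq D x y = (\<Sum>i\<in>UNIV. cnj (x$i) * (D *v y)$i)"
  by (simp add: sesq_def matrix_vector_mult_def sum_distrib_left mult.assoc)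

lemma sesq_axis_left: "sesq D (axis i 1) x = (D *v x) $ i"
proof -
  have "cnj (axis i 1 $ k) * (D *v x)$k = (if k = i then (D *v x)$k else 0)" for k
    by (simp add: axis_def)
  thus ?thesis by (simp add: sesq_mult_vector)
qed

lemma mult_axis: "((D::complex^'m::finite^'m) *v axis j 1) $ i = D$i$j"
  unfolding matrix_vector_mult_def by (simp add: axis_def if_distrib cong: if_cong)

lemma nonneg_quadratic_discriminant:
  fixes a b c :: real
  assumes "a \<ge> 0" "c \<ge> 0" "\<And>t. 0 \<le> a + 2*b*t + c*t^2"
  shows "b^2 \<le> a*c"
proof (cases "c > 0")
  case True
  have "0 \<le> a + 2*b*(-b/c) + c*(-b/c)^2" by (rule assms(3))
  also have "\<dots> = a - b^2/c" using True by (simp add: field_simps power2_eq_square)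
  finally have "b^2/c \<le> a" by simp
  thus ?thesis using True by (simp add: divide_le_eq mult.commute)
next
  case False
  hence c0: "c = 0" using assms(2) by simp
  have "b = 0"
  proof (rule ccontr)
    assume "b \<noteq> 0"
    have "0 \<le> a + 2*b*(-(a+1)/(2*b)) + c*(-(a+1)/(2*b))^2" by (rule assms(3))
    also have "\<dots> = -1" using \<open>b\<noteq>0\<close> c0 by (simp add: field_simps)
    finally show False by simp
  qed
  thus ?thesis using assms by simp
qed

lemma cauchy_schwarz_sesq:
  assumes h: "hermitian D" and psd: "\<And>x. 0 \<le> Re (sesq D x x)"
  shows "(cmod (sesq D x y))^2 \<le> Re (sesq D x x) * Re (sesq D y y)"
proof (cases "sesq D x y = 0")
  case True thus ?thesis using psd by simp
next
  case False
  define s where "s = sesq D x y"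
  define c where "c = cnj s / of_real (cmod s)"
  have sn: "cmod s > 0" using False s_def by simp
  have ss: "s * cnj s = of_real (cmod s) * of_real (cmod s)"
    using complex_norm_square[of s] by (simp add: power2_eq_square)
  have cs: "c * s = of_real (cmod s)"
    using sn ss by (simp add: c_def field_simps)
  have cc: "cnj c * c = 1"
    using sn ss by (simp add: c_def field_simps)
  have "0 \<le> Re (sesq D x x) + 2 * cmod s * t + Re (sesq D y y) * t^2" for t :: real
  proof -
    define z where "z = (of_real t * c) *s y"
    have "0 \<le> Re (sesq D (x + z) (x + z))" by (rule psd)
    also have "sesq D (x + z) (x + z) = sesq D x x + sesq D x z + cnj (sesq D x z) + sesq D z z"
      by (simp add: sesq_add_left sesq_add_right sesq_swap[OF h, of z x])
    also have "sesq D x z = of_real t * of_real (cmod s)"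
      by (simp add: z_def sesq_scale_right s_def[symmetric] cs[symmetric] mult.assoc)
    also have "sesq D z z = of_real (t^2) * sesq D y y"
      using cc by (simp add: z_def sesq_scale_right sesq_scale_left power2_eq_square algebra_simps)
    finally show ?thesis by (simp add: algebra_simps)
  qed
  from nonneg_quadratic_discriminant[OF psd psd this] show ?thesis by (simp add: s_def)
qed

lemma psd_null_vector_in_kernel:
  assumes h: "hermitian D" and psd: "\<And>x. 0 \<le> Re (sesq D x x)" and z: "Re (sesq D x x) = 0"
  shows "D *v x = 0"
proof -
  have "(D *v x) $ j = 0" for j
  proof -
    have "(cmod (sesq D (axis j 1) x))^2 \<le> 0"
      using cauchy_schwarz_sesq[OF h psd, of "axis j 1" x] z by simp
    thus ?thesis by (simp add: sesq_axis_left)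
  qed
  thus ?thesis by (simp add: vec_eq_iff)
qed

lemma hermitian_left_kernel:
  assumes "hermitian H" "H *v v = 0"
  shows "(\<Sum>p\<in>UNIV. cnj (v$p) * H$p$q) = 0"
proof -
  have "(\<Sum>p\<in>UNIV. cnj (v$p) * H$p$q) = cnj ((H *v v) $ q)"
    by (simp add: matrix_vector_mult_def hermitian_cnj[OF assms(1)] mult.commute)
  thus ?thesis using assms(2) by simp
qed

subsection \<open>Partial traces and the marginal conditions\<close>

definition ptr1 :: "complex^('n\<times>'n)^('n\<times>'n) \<Rightarrow> complex^'n^'n" where
  "ptr1 H = (\<chi> a b. \<Sum>k\<in>UNIV. H$(a,k)$(b,k))"
definition ptr2 :: "complex^('n\<times>'n)^('n\<times>'n) \<Rightarrow> complex^'n^'n" where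
  "ptr2 H = (\<chi> a b. \<Sum>k\<in>UNIV. H$(k,a)$(k,b))"

lemma ptr1_add: "ptr1 (H + K) = ptr1 H + ptr1 K"
  and ptr1_diff: "ptr1 (H - K) = ptr1 H - ptr1 K"
  and ptr1_scale: "ptr1 (r *\<^sub>R H) = r *\<^sub>R ptr1 H"
  and ptr2_add: "ptr2 (H + K) = ptr2 H + ptr2 K"
  and ptr2_diff: "ptr2 (H - K) = ptr2 H - ptr2 K"
  and ptr2_scale: "ptr2 (r *\<^sub>R H) = r *\<^sub>R ptr2 H"
  by (simp_all add: vec_eq_iff ptr1_def ptr2_def sum.distrib sum_subtractf scaleR_complex
      sum_distrib_left)

lemma hermitian_ptr:
  assumes "hermitian H"
  shows hermitian_ptr1: "hermitian (ptr1 H)" and hermitian_ptr2: "hermitian (ptr2 H)"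
  unfolding hermitian_def ptr1_def ptr2_def by (simp_all add: hermitian_cnj[OF assms])

lemma if_one_zero_mult: "(if P then 1 else 0) * (y::'a::semiring_1) = (if P then y else 0)"
  and mult_if_one_zero: "y * (if P then 1 else 0) = (if P then y else 0)"
  by simp_all

lemma sum_pairs: "(\<Sum>p\<in>UNIV. f p) = (\<Sum>a\<in>UNIV. \<Sum>b\<in>UNIV. f (a,b))"
  by (simp add: UNIV_Times_UNIV[symmetric] sum.cartesian_product del: UNIV_Times_UNIV)

lemma trace_eq_sum_ptr1: "trace (H::complex^('n::finite\<times>'n)^('n\<times>'n)) = (\<Sum>a\<in>UNIV. ptr1 H $a$a)"
  by (simp add: trace_def ptr1_def sum_pairs[of "\<lambda>p. H$p$p"])

lemma sum_delta_pair:
  fixes a :: "'a::finite" and b :: "'b::finite"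
  shows "(\<Sum>x\<in>UNIV. \<Sum>y\<in>UNIV. if y = b \<and> x = a then f x y else (0::'c::comm_monoid_add)) = f a b"
proof -
  have "(\<Sum>y\<in>UNIV. if y = b \<and> x = a then f x y else (0::'c)) = (if x = a then f x b else 0)" for x
    by (cases "x = a") simp_all
  thus ?thesis by simp
qed

lemma sum_delta_outer:
  fixes k :: "'b::finite"
  shows "(\<Sum>l\<in>UNIV. \<Sum>b\<in>UNIV. if l = k then f l b else (0::'a::comm_monoid_add)) = (\<Sum>b\<in>UNIV. f k b)"
proof -
  have "(\<Sum>l\<in>UNIV. \<Sum>b\<in>UNIV. if l = k then f l b else (0::'a))
      = (\<Sum>l\<in>UNIV. if l = k then (\<Sum>b\<in>UNIV. f l b) else 0)"
    by (rule sum.cong) auto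
  thus ?thesis by simp
qed

lemma trace_kron_left:
  fixes H :: "complex^('n::finite\<times>'n)^('n\<times>'n)"
  shows "trace (H ** kron A (mat 1)) = (\<Sum>a\<in>UNIV. \<Sum>b\<in>UNIV. A$b$a * ptr1 H $a$b)"
proof -
  have "trace (H ** kron A (mat 1)) =
     (\<Sum>a\<in>UNIV. \<Sum>k\<in>UNIV. \<Sum>b\<in>UNIV. \<Sum>l\<in>UNIV. H$(a,k)$(b,l) * (A$b$a * (if l = k then 1 else 0)))"
    unfolding trace_def matrix_matrix_mult_def kron_def mat_def
    by (simp only: vec_lambda_beta, subst (1 2) sum_pairs) simp
  also have "\<dots> = (\<Sum>a\<in>UNIV. \<Sum>k\<in>UNIV. \<Sum>b\<in>UNIV. H$(a,k)$(b,k) * A$b$a)"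
    by (simp add: mult_if_one_zero if_distrib cong: if_cong)
  also have "\<dots> = (\<Sum>a\<in>UNIV. \<Sum>b\<in>UNIV. \<Sum>k\<in>UNIV. H$(a,k)$(b,k) * A$b$a)"
    by (rule sum.cong[OF refl], rule sum.swap)
  finally show ?thesis by (simp add: ptr1_def sum_distrib_left mult.commute)
qed

lemma trace_kron_right:
  fixes H :: "complex^('n::finite\<times>'n)^('n\<times>'n)"
  shows "trace (H ** kron (mat 1) B) = (\<Sum>a\<in>UNIV. \<Sum>b\<in>UNIV. B$b$a * ptr2 H $a$b)"
proof -
  have "trace (H ** kron (mat 1) B) =
     (\<Sum>k\<in>UNIV. \<Sum>a\<in>UNIV. \<Sum>l\<in>UNIV. \<Sum>b\<in>UNIV. H$(k,a)$(l,b) * ((if l = k then 1 else 0) * B$b$a))"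
    unfolding trace_def matrix_matrix_mult_def kron_def mat_def
    by (simp only: vec_lambda_beta, subst (1 2) sum_pairs) simp
  also have "\<dots> = (\<Sum>k\<in>UNIV. \<Sum>a\<in>UNIV. \<Sum>l\<in>UNIV. \<Sum>b\<in>UNIV. if l = k then H$(k,a)$(k,b) * B$b$a else 0)"
    by (rule sum.cong[OF refl])+ simp
  also have "\<dots> = (\<Sum>a\<in>UNIV. \<Sum>k\<in>UNIV. \<Sum>b\<in>UNIV. H$(k,a)$(k,b) * B$b$a)"
    by (simp only: sum_delta_outer, rule sum.swap)
  also have "\<dots> = (\<Sum>a\<in>UNIV. \<Sum>b\<in>UNIV. \<Sum>k\<in>UNIV. H$(k,a)$(k,b) * B$b$a)"
    by (rule sum.cong[OF refl], rule sum.swap)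
  finally show ?thesis by (simp add: ptr2_def sum_distrib_left mult.commute)
qed

definition matrix_unit :: "'n \<Rightarrow> 'n \<Rightarrow> complex^'n^'n" where
  "matrix_unit c d = (\<chi> i j. if i = c \<and> j = d then 1 else 0)"

lemma pairing_matrix_unit:
  "(\<Sum>a\<in>UNIV. \<Sum>b\<in>UNIV. matrix_unit c d $b$a * M$a$b) = M$d$c"
  by (simp add: matrix_unit_def if_one_zero_mult sum_delta_pair)

lemma ntr_matrix_unit:
  "ntr (matrix_unit c d) = (if d = c then 1 / of_nat CARD('n) else 0)"
  for c d :: "'n::finite"
  by (cases "d = c") (auto simp: ntr_def trace_def matrix_unit_def intro: sum.neutral)

lemma pairing_scalar_matrix:
  "(\<Sum>a\<in>UNIV. \<Sum>b\<in>UNIV. A$b$a * mat c $a$b) = trace A * c"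
proof -
  have "(\<Sum>b\<in>UNIV. A$b$a * mat c $a$b) = A$a$a * c" for a
    by (simp add: mat_def mult_if_one_zero if_distrib[of "\<lambda>z. _ * z"] eq_commute[of a] cong: if_cong)
  thus ?thesis by (simp add: trace_def sum_distrib_right)
qed

lemma Gamma_iff:
  fixes D :: "complex^('n::finite\<times>'n)^('n\<times>'n)"
  shows "D \<in> Gamma \<longleftrightarrow> density_matrix D \<and>
    ptr1 D = mat (1 / of_nat CARD('n)) \<and> ptr2 D = mat (1 / of_nat CARD('n))"
proof -
  have left: "(\<forall>A::complex^'n^'n. trace (D ** kron A (mat 1)) = ntr A) \<longleftrightarrow>
      ptr1 D = mat (1 / of_nat CARD('n))"
  proof
    assume marg: "\<forall>A. trace (D ** kron A (mat 1)) = ntr A"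
    have "ptr1 D $d$c = ntr (matrix_unit c d)" for c d
      using marg[rule_format, of "matrix_unit c d"] by (simp only: trace_kron_left pairing_matrix_unit)
    thus "ptr1 D = mat (1 / of_nat CARD('n))"
      by (simp add: vec_eq_iff mat_def ntr_matrix_unit eq_commute)
  next
    assume "ptr1 D = mat (1 / of_nat CARD('n))"
    thus "\<forall>A. trace (D ** kron A (mat 1)) = ntr A"
      by (simp only: trace_kron_left pairing_scalar_matrix) (simp add: ntr_def)
  qed
  have right: "(\<forall>B::complex^'n^'n. trace (D ** kron (mat 1) B) = ntr B) \<longleftrightarrow>
      ptr2 D = mat (1 / of_nat CARD('n))"
  proof
    assume marg: "\<forall>B. trace (D ** kron (mat 1) B) = ntr B"
    have "ptr2 D $d$c = ntr (matrix_unit c d)" for c d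
      using marg[rule_format, of "matrix_unit c d"] by (simp only: trace_kron_right pairing_matrix_unit)
    thus "ptr2 D = mat (1 / of_nat CARD('n))"
      by (simp add: vec_eq_iff mat_def ntr_matrix_unit eq_commute)
  next
    assume "ptr2 D = mat (1 / of_nat CARD('n))"
    thus "\<forall>B. trace (D ** kron (mat 1) B) = ntr B"
      by (simp only: trace_kron_right pairing_scalar_matrix) (simp add: ntr_def)
  qed
  show ?thesis unfolding Gamma_def using left right by blast
qed

subsection \<open>Two criteria for extremality in Gamma\<close>

lemma trace_add_scaleR: "trace (D + r *\<^sub>R (H::complex^'n^'n)) = trace D + of_real r * trace H"
  by (simp add: trace_def algebra_simps sum.distrib sum_distrib_left scaleR_complex)

lemma hermitian_add_diff:
  assumes "hermitian A" "hermitian B"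
  shows hermitian_add: "hermitian (A + B)" and hermitian_diff: "hermitian (A - B)"
  using hermitian_cnj[OF assms(1)] hermitian_cnj[OF assms(2)] by (simp_all add: hermitian_def)

lemma hermitian_scaleR: assumes "hermitian A" shows "hermitian (r *\<^sub>R A)"
  using hermitian_cnj[OF assms] by (simp add: hermitian_def scaleR_complex)

lemma Gamma_perturb:
  fixes D H :: "complex^('n::finite\<times>'n)^('n\<times>'n)"
  assumes D: "D \<in> Gamma" and hH: "hermitian H" and p1: "ptr1 H = 0" and p2: "ptr2 H = 0"
    and bound: "\<And>x. cmod (sesq H x x) \<le> C * Re (sesq D x x)" and c: "\<bar>c\<bar> * C \<le> 1"
  shows "D + c *\<^sub>R H \<in> Gamma"
proof -
  have hD: "hermitian D" and psd: "\<And>x. 0 \<le> Re (sesq D x x)" and tr: "trace D = 1"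
    using D by (auto simp: Gamma_iff density_matrix_iff)
  have trH: "trace H = 0" using p1 by (simp add: trace_eq_sum_ptr1)
  have "0 \<le> Re (sesq (D + c *\<^sub>R H) x x)" for x
  proof -
    have "\<bar>c * Re (sesq H x x)\<bar> \<le> \<bar>c\<bar> * cmod (sesq H x x)"
      by (simp add: abs_mult abs_Re_le_cmod mult_left_mono)
    also have "\<dots> \<le> \<bar>c\<bar> * (C * Re (sesq D x x))"
      by (rule mult_left_mono[OF bound]) simp
    also have "\<dots> \<le> 1 * Re (sesq D x x)"
      using mult_right_mono[OF c psd[of x]] by simp
    finally show ?thesis by (simp add: sesq_add_matrix sesq_scale_matrix)
  qed
  thus ?thesis
    using D hermitian_add[OF hD hermitian_scaleR[OF hH]] tr trH p1 p2
    by (simp add: Gamma_iff density_matrix_iff trace_add_scaleR ptr1_add ptr1_scale ptr2_add ptr2_scale)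
qed

lemma not_extreme_if_perturbable:
  fixes D H :: "complex^('n::finite\<times>'n)^('n\<times>'n)"
  assumes D: "D \<in> Gamma" and hH: "hermitian H" and H0: "H \<noteq> 0"
    and p1: "ptr1 H = 0" and p2: "ptr2 H = 0"
    and bound: "\<And>x. cmod (sesq H x x) \<le> C * Re (sesq D x x)" and C: "C \<ge> 0"
  shows "\<not> D extreme_point_of Gamma"
proof
  assume ext: "D extreme_point_of Gamma"
  define c where "c = 1 / (C + 1)"
  have c: "c > 0" "\<bar>c\<bar> * C \<le> 1" "\<bar>-c\<bar> * C \<le> 1" using C by (auto simp: c_def field_simps)
  have plus: "D + c *\<^sub>R H \<in> Gamma" and minus: "D + (-c) *\<^sub>R H \<in> Gamma"
    using Gamma_perturb[OF D hH p1 p2 bound c(2)] Gamma_perturb[OF D hH p1 p2 bound c(3)] by auto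
  have "D + c *\<^sub>R H \<noteq> D + (-c) *\<^sub>R H"
    using c(1) H0 by (simp only: add_left_cancel scaleR_cancel_right) auto
  moreover have "D = midpoint (D + c *\<^sub>R H) (D + (-c) *\<^sub>R H)"
    by (simp add: midpoint_def algebra_simps scaleR_2[symmetric])
  ultimately have "D \<in> open_segment (D + c *\<^sub>R H) (D + (-c) *\<^sub>R H)"
    by (metis midpoint_in_open_segment)
  thus False using ext plus minus unfolding extreme_point_of_def by blast
qed

lemma kernel_of_convex_combination:
  fixes D D1 D2 :: "complex^'m::finite^'m"
  assumes d1: "density_matrix D1" and d2: "density_matrix D2"
    and eq: "D = (1 - u) *\<^sub>R D1 + u *\<^sub>R D2" and u: "0 \<le> u" "u < 1"
    and z: "D *v x = 0"
  shows "D1 *v x = 0"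
proof -
  have h1: "hermitian D1" and p1: "\<And>x. 0 \<le> Re (sesq D1 x x)"
    and p2: "\<And>x. 0 \<le> Re (sesq D2 x x)"
    using d1 d2 by (auto simp: density_matrix_iff)
  have "(1 - u) * Re (sesq D1 x x) + u * Re (sesq D2 x x) = Re (sesq D x x)"
    unfolding eq by (simp add: sesq_add_matrix sesq_scale_matrix)
  also have "\<dots> = 0" using z by (simp add: sesq_mult_vector)
  finally have "(1 - u) * Re (sesq D1 x x) = 0"
    using u p1[of x] p2[of x] by (smt (verit) mult_nonneg_nonneg)
  hence "Re (sesq D1 x x) = 0" using u by simp
  thus ?thesis by (rule psd_null_vector_in_kernel[OF h1 p1])
qed

lemma extreme_if_rigid:
  fixes D :: "complex^('n::finite\<times>'n)^('n\<times>'n)"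
  assumes D: "D \<in> Gamma" and ker: "\<And>v. v \<in> V \<Longrightarrow> D *v v = 0"
    and rigid: "\<And>H. hermitian H \<Longrightarrow> (\<And>v. v \<in> V \<Longrightarrow> H *v v = 0) \<Longrightarrow>
                   ptr1 H = 0 \<Longrightarrow> ptr2 H = 0 \<Longrightarrow> H = 0"
  shows "D extreme_point_of Gamma"
proof -
  have equal: "D1 = D" if G1: "D1 \<in> Gamma" and G2: "D2 \<in> Gamma"
    and eq: "D = (1 - u) *\<^sub>R D1 + u *\<^sub>R D2" and u: "0 \<le> u" "u < 1" for D1 D2 u
  proof -
    have "D1 - D = 0"
    proof (rule rigid)
      show "hermitian (D1 - D)"
        using G1 D hermitian_diff[of D1 D] by (simp add: Gamma_iff density_matrix_iff)
      show "(D1 - D) *v v = 0" if "v \<in> V" for v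
        using kernel_of_convex_combination[OF _ _ eq u ker[OF that]] G1 G2 ker[OF that]
        by (simp add: Gamma_iff matrix_vector_mult_diff_rdistrib)
      show "ptr1 (D1 - D) = 0" "ptr2 (D1 - D) = 0"
        using G1 D by (simp_all add: Gamma_iff ptr1_diff ptr2_diff)
    qed
    thus ?thesis by simp
  qed
  show ?thesis unfolding extreme_point_of_def
  proof (intro conjI ballI notI D)
    fix D1 D2 assume G1: "D1 \<in> Gamma" and G2: "D2 \<in> Gamma" and "D \<in> open_segment D1 D2"
    then obtain u where ne: "D1 \<noteq> D2" and u: "0 < u" "u < 1"
      and eq: "D = (1 - u) *\<^sub>R D1 + u *\<^sub>R D2"
      by (auto simp: in_segment)
    have eq': "D = (1 - (1 - u)) *\<^sub>R D2 + (1 - u) *\<^sub>R D1" using eq by (simp add: add.commute)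
    have "D1 = D" using equal[OF G1 G2 eq] u by simp
    moreover have "D2 = D" using equal[OF G2 G1 eq'] u by simp
    ultimately show False using ne by simp
  qed
qed

definition independent_rows :: "'a::field^'m^'m \<Rightarrow> ('k::finite \<Rightarrow> 'm) \<Rightarrow> bool" where
  "independent_rows D \<iota> \<longleftrightarrow> (\<forall>c. (\<Sum>a\<in>UNIV. c a *s row (\<iota> a) D) = 0 \<longrightarrow> (\<forall>a. c a = 0))"

lemma independent_rows_of_rank:
  fixes D :: "'a::field^'m::finite^'m"
  assumes "CARD('k) \<le> rank D"
  obtains \<iota> :: "'k::finite \<Rightarrow> 'm" where "independent_rows D \<iota>"
proof -
  obtain B where B: "B \<subseteq> rows D" "vec.independent B" "card B = vec.dim (rows D)"
    by (rule vec.basis_exists)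
  have "rows D = range (\<lambda>i. row i D)" by (auto simp: rows_def)
  hence "finite (rows D)" by simp
  hence finB: "finite B" using B(1) finite_subset by blast
  have "CARD('k) \<le> card B" using B(3) assms by (simp add: row_rank_def_gen)
  then obtain B' where B': "B' \<subseteq> B" "card B' = CARD('k)" and finB': "finite B'"
    by (rule obtain_subset_with_card_n)
  have indB': "vec.independent B'" using B(2) B'(1) vec.independent_mono by blast
  have "\<exists>f. bij_betw f (UNIV :: 'k set) B'"
    by (rule finite_same_card_bij[OF _ finB']) (simp_all add: B'(2))
  then obtain f where f: "bij_betw f (UNIV :: 'k set) B'" ..
  have "f a \<in> rows D" for a
    using f B'(1) B(1) by (auto simp: bij_betw_def)
  hence "\<exists>i. f a = row i D" for a by (simp add: rows_def)
  then obtain \<iota> where row_\<iota>: "\<And>a. f a = row (\<iota> a) D" by metis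
  have inv_f: "inv_into UNIV f (f a) = a" for a
    using f by (simp add: bij_betw_inv_into_left)
  show ?thesis
  proof (rule that, unfold independent_rows_def, rule allI, rule impI)
    fix c :: "'k \<Rightarrow> 'a"
    assume sum0: "(\<Sum>a\<in>UNIV. c a *s row (\<iota> a) D) = 0"
    define u where "u v = c (inv_into UNIV f v)" for v
    have "(\<Sum>v\<in>B'. u v *s v) = (\<Sum>a\<in>UNIV. c a *s row (\<iota> a) D)"
      by (subst sum.reindex_bij_betw[OF f, symmetric]) (simp add: u_def inv_f row_\<iota>[symmetric])
    also have "\<dots> = 0" by (rule sum0)
    finally have "\<forall>v\<in>B'. u v = 0"
      using indB' vec.dependent_finite[OF finB'] by blast
    thus "\<forall>a. c a = 0"
      using f by (metis bij_betwE inv_f iso_tuple_UNIV_I u_def)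
  qed
qed

lemma rank_ge_of_independent_rows:
  fixes D :: "'a::field^'m::finite^'m" and \<iota> :: "'k::finite \<Rightarrow> 'm"
  assumes ind: "independent_rows D \<iota>"
  shows "CARD('k) \<le> rank D"
proof -
  let ?r = "\<lambda>a. row (\<iota> a) D"
  have inj: "inj ?r"
  proof (rule injI, rule ccontr)
    fix a b assume eq: "?r a = ?r b" and "a \<noteq> b"
    let ?c = "\<lambda>x. if x = a then 1 else if x = b then -1 else (0::'a)"
    have "(\<Sum>x\<in>UNIV. ?c x *s ?r x) = (\<Sum>x\<in>{a,b}. ?c x *s ?r x)"
      by (rule sum.mono_neutral_right) auto
    also have "\<dots> = 0" using \<open>a \<noteq> b\<close> eq by (simp add: vector_smult_lneg)
    finally show False using ind[unfolded independent_rows_def, rule_format, of ?c a] by simp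
  qed
  have "vec.independent (range ?r)"
  proof (rule vec.independent_if_scalars_zero)
    fix c v assume sum0: "(\<Sum>w\<in>range ?r. c w *s w) = 0" and "v \<in> range ?r"
    have "(\<Sum>a\<in>UNIV. c (?r a) *s ?r a) = 0"
      using sum0 by (simp add: sum.reindex[OF inj])
    hence "\<forall>a. c (?r a) = 0"
      using ind[unfolded independent_rows_def, THEN spec[of _ "\<lambda>a. c (?r a)"]] by simp
    thus "c v = 0" using \<open>v \<in> range ?r\<close> by blast
  qed simp
  moreover have "range ?r \<subseteq> rows D" by (auto simp: rows_def)
  ultimately have "card (range ?r) \<le> vec.dim (rows D)" by (rule vec.independent_card_le_dim[rotated])
  thus ?thesis using inj by (simp add: row_rank_def_gen card_image)
qed

subsection \<open>The upper bound: rank^2 > 2 n^2 rules out extremality\<close>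

text \<open>A real-linear parametrisation of the Hermitian k x k matrices by \<open>real^('k\<times>'k)\<close>:
  entry (a, b) is \<open>(R_ab + R_ba) + i (R_ab - R_ba)\<close>.\<close>
definition herm_param :: "real^('k::finite\<times>'k) \<Rightarrow> 'k \<Rightarrow> 'k \<Rightarrow> complex" where
  "herm_param R a b = of_real (R$(a,b) + R$(b,a)) + \<i> * of_real (R$(a,b) - R$(b,a))"

lemma herm_param_cnj: "cnj (herm_param R a b) = herm_param R b a"
  and herm_param_add: "herm_param (R + S) a b = herm_param R a b + herm_param S a b"
  and herm_param_scale: "herm_param (r *\<^sub>R R) a b = of_real r * herm_param R a b"
  by (simp_all add: herm_param_def algebra_simps)

lemma herm_param_eq_zero: assumes "\<And>a b. herm_param R a b = 0" shows "R = 0"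
proof -
  have "R$(a,b) + R$(b,a) = 0" "R$(a,b) - R$(b,a) = 0" for a b
    using assms[of a b] by (simp_all add: herm_param_def complex_eq_iff)
  thus ?thesis by (simp add: vec_eq_iff)
qed

text \<open>The perturbation \<open>D K D\<close>, where K is the Hermitian matrix with parameter R living on
  the rows selected by \<open>\<iota>\<close>.  Its range lies in the range of D, which yields the domination
  estimate needed for \<open>not_extreme_if_perturbable\<close>.\<close>
definition sandwich :: "complex^'m^'m \<Rightarrow> ('k::finite \<Rightarrow> 'm) \<Rightarrow> real^('k\<times>'k) \<Rightarrow> complex^'m^'m" where
  "sandwich D \<iota> R = (\<chi> p q. \<Sum>a\<in>UNIV. \<Sum>b\<in>UNIV. D$p$(\<iota> a) * herm_param R a b * D$(\<iota> b)$q)"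

lemma sandwich_add: "sandwich D \<iota> (R + S) = sandwich D \<iota> R + sandwich D \<iota> S"
  and sandwich_scale: "sandwich D \<iota> (r *\<^sub>R R) = r *\<^sub>R sandwich D \<iota> R"
  by (simp_all add: vec_eq_iff sandwich_def herm_param_add herm_param_scale algebra_simps
      sum.distrib scaleR_complex sum_distrib_left)

lemma hermitian_sandwich: assumes "hermitian D" shows "hermitian (sandwich D \<iota> R)"
proof -
  have "sandwich D \<iota> R $ j $ i = cnj (sandwich D \<iota> R $ i $ j)" for i j
  proof -
    have "cnj (sandwich D \<iota> R $ i $ j) = (\<Sum>a\<in>UNIV. \<Sum>b\<in>UNIV. D$(\<iota> a)$i * herm_param R b a * D$j$(\<iota> b))"
      by (simp add: sandwich_def hermitian_cnj[OF assms] herm_param_cnj)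
    also have "\<dots> = (\<Sum>b\<in>UNIV. \<Sum>a\<in>UNIV. D$(\<iota> a)$i * herm_param R b a * D$j$(\<iota> b))"
      by (rule sum.swap)
    also have "\<dots> = sandwich D \<iota> R $ j $ i"
      unfolding sandwich_def vec_lambda_beta
      by (rule sum.cong[OF refl], rule sum.cong[OF refl]) (simp add: algebra_simps)
    finally show ?thesis by simp
  qed
  thus ?thesis unfolding hermitian_def by blast
qed

lemma sandwich_eq_zero:
  fixes D :: "complex^'m::finite^'m"
  assumes h: "hermitian D" and ind: "independent_rows D \<iota>" and z: "sandwich D \<iota> R = 0"
  shows "R = 0"
proof -
  have ind': "\<And>c. (\<Sum>a\<in>UNIV. c a *s row (\<iota> a) D) = 0 \<Longrightarrow> c b = 0" for b
    using ind unfolding independent_rows_def by blast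
  have col: "(\<Sum>a\<in>UNIV. D$p$(\<iota> a) * herm_param R a b) = 0" for p b
  proof -
    have "(\<Sum>b\<in>UNIV. (\<Sum>a\<in>UNIV. D$p$(\<iota> a) * herm_param R a b) *s row (\<iota> b) D) = row p (sandwich D \<iota> R)"
    proof (rule iffD2[OF vec_eq_iff], rule allI)
      fix q
      have "(\<Sum>b\<in>UNIV. (\<Sum>a\<in>UNIV. D$p$(\<iota> a) * herm_param R a b) *s row (\<iota> b) D) $ q
          = (\<Sum>b\<in>UNIV. \<Sum>a\<in>UNIV. D$p$(\<iota> a) * herm_param R a b * D$(\<iota> b)$q)"
        by (simp add: row_def sum_distrib_right)
      also have "\<dots> = (\<Sum>a\<in>UNIV. \<Sum>b\<in>UNIV. D$p$(\<iota> a) * herm_param R a b * D$(\<iota> b)$q)"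
        by (rule sum.swap)
      finally show "(\<Sum>b\<in>UNIV. (\<Sum>a\<in>UNIV. D$p$(\<iota> a) * herm_param R a b) *s row (\<iota> b) D) $ q
          = row p (sandwich D \<iota> R) $ q" by (simp add: sandwich_def row_def)
    qed
    also have "\<dots> = 0" using z by (simp add: row_def vec_eq_iff)
    finally show ?thesis by (rule ind')
  qed
  have "herm_param R b a = 0" for a b
  proof (rule ind')
    show "(\<Sum>a\<in>UNIV. herm_param R b a *s row (\<iota> a) D) = 0"
    proof (rule iffD2[OF vec_eq_iff], rule allI)
      fix p
      have "(\<Sum>a\<in>UNIV. herm_param R b a *s row (\<iota> a) D) $ p = cnj (\<Sum>a\<in>UNIV. D$p$(\<iota> a) * herm_param R a b)"
        by (simp add: row_def hermitian_cnj[OF h] herm_param_cnj mult.commute)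
      thus "(\<Sum>a\<in>UNIV. herm_param R b a *s row (\<iota> a) D) $ p = 0 $ p" by (simp add: col)
    qed
  qed
  thus ?thesis by (rule herm_param_eq_zero)
qed

lemma sum_swap_outer_pairs:
  "(\<Sum>a\<in>A. \<Sum>b\<in>B. \<Sum>p\<in>P. \<Sum>q\<in>Q. f a b p q) = (\<Sum>p\<in>P. \<Sum>q\<in>Q. \<Sum>a\<in>A. \<Sum>b\<in>B. f a b p q)"
proof -
  have "(\<Sum>a\<in>A. \<Sum>b\<in>B. \<Sum>p\<in>P. \<Sum>q\<in>Q. f a b p q) = (\<Sum>a\<in>A. \<Sum>p\<in>P. \<Sum>b\<in>B. \<Sum>q\<in>Q. f a b p q)"
    by (rule sum.cong[OF refl], rule sum.swap)
  also have "\<dots> = (\<Sum>p\<in>P. \<Sum>a\<in>A. \<Sum>q\<in>Q. \<Sum>b\<in>B. f a b p q)"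
    by (subst sum.swap) (rule sum.cong[OF refl], rule sum.cong[OF refl], rule sum.swap)
  also have "\<dots> = (\<Sum>p\<in>P. \<Sum>q\<in>Q. \<Sum>a\<in>A. \<Sum>b\<in>B. f a b p q)"
    by (rule sum.cong[OF refl], rule sum.swap)
  finally show ?thesis .
qed

lemma sesq_sandwich:
  assumes h: "hermitian D"
  shows "sesq (sandwich D \<iota> R) x x =
    (\<Sum>a\<in>UNIV. \<Sum>b\<in>UNIV. cnj ((D *v x)$(\<iota> a)) * herm_param R a b * (D *v x)$(\<iota> b))"
proof -
  have cnj_Dx: "cnj ((D *v x) $ i) = (\<Sum>p\<in>UNIV. cnj (x$p) * D$p$i)" for i
    by (simp add: matrix_vector_mult_def hermitian_cnj[OF h] mult.commute)
  have "(\<Sum>a\<in>UNIV. \<Sum>b\<in>UNIV. cnj ((D *v x)$(\<iota> a)) * herm_param R a b * (D *v x)$(\<iota> b))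
     = (\<Sum>a\<in>UNIV. \<Sum>b\<in>UNIV. \<Sum>p\<in>UNIV. \<Sum>q\<in>UNIV.
          cnj (x$p) * (D$p$(\<iota> a) * herm_param R a b * D$(\<iota> b)$q) * x$q)"
    by (simp only: cnj_Dx) (simp add: matrix_vector_mult_def sum_distrib_left sum_distrib_right mult_ac)
  also have "\<dots> = (\<Sum>p\<in>UNIV. \<Sum>q\<in>UNIV. \<Sum>a\<in>UNIV. \<Sum>b\<in>UNIV.
          cnj (x$p) * (D$p$(\<iota> a) * herm_param R a b * D$(\<iota> b)$q) * x$q)"
    by (rule sum_swap_outer_pairs)
  also have "\<dots> = sesq (sandwich D \<iota> R) x x"
    by (simp add: sesq_def sandwich_def sum_distrib_left sum_distrib_right)
  finally show ?thesis by simp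
qed

text \<open>It uses that every
  component of \<open>D x\<close> satisfies \<open>|(D x)_i|^2 \<le> D_ii <x, D x> \<le> <x, D x>\<close> (Cauchy--Schwarz
  and trace D = 1).\<close>
lemma sandwich_dominated:
  fixes D :: "complex^'m::finite^'m"
  assumes h: "hermitian D" and psd: "\<And>x. 0 \<le> Re (sesq D x x)" and tr: "trace D = 1"
  shows "cmod (sesq (sandwich D \<iota> R) x x)
    \<le> (\<Sum>a\<in>UNIV. \<Sum>b\<in>UNIV. cmod (herm_param R a b)) * Re (sesq D x x)"
proof -
  define q where "q = Re (sesq D x x)"
  define y where "y = D *v x"
  have q0: "0 \<le> q" unfolding q_def by (rule psd)
  have diag_ge: "0 \<le> Re (D$i$i)" for i
    using psd[of "axis i 1"] by (simp add: sesq_axis_left mult_axis)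
  have diag_le: "Re (D$i$i) \<le> 1" for i
  proof -
    have "Re (D$i$i) \<le> (\<Sum>j\<in>UNIV. Re (D$j$j))"
      by (rule member_le_sum) (auto intro: diag_ge)
    also have "\<dots> = 1" using tr by (simp add: trace_def flip: Re_sum)
    finally show ?thesis .
  qed
  have sq: "(cmod (y$i))^2 \<le> q" for i
  proof -
    have "(cmod (sesq D (axis i 1) x))^2 \<le> Re (sesq D (axis i 1) (axis i 1)) * q"
      unfolding q_def by (rule cauchy_schwarz_sesq[OF h psd])
    also have "\<dots> \<le> 1 * q"
      using diag_le[of i] q0 by (intro mult_right_mono) (simp_all add: sesq_axis_left mult_axis)
    finally show ?thesis by (simp add: sesq_axis_left y_def)
  qed
  have pair: "cmod (y$i) * cmod (y$j) \<le> q" for i j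
  proof -
    have "0 \<le> (cmod (y$i) - cmod (y$j))^2" by simp
    hence "2 * (cmod (y$i) * cmod (y$j)) \<le> (cmod (y$i))^2 + (cmod (y$j))^2"
      by (simp add: power2_eq_square algebra_simps)
    thus ?thesis using sq[of i] sq[of j] by simp
  qed
  have "cmod (sesq (sandwich D \<iota> R) x x)
      = cmod (\<Sum>a\<in>UNIV. \<Sum>b\<in>UNIV. cnj (y$(\<iota> a)) * herm_param R a b * y$(\<iota> b))"
    by (simp add: sesq_sandwich[OF h] y_def)
  also have "\<dots> \<le> (\<Sum>a\<in>UNIV. \<Sum>b\<in>UNIV. cmod (herm_param R a b) * q)"
  proof (rule order_trans[OF norm_sum], rule sum_mono, rule order_trans[OF norm_sum], rule sum_mono)
    fix a b
    have "cmod (cnj (y$(\<iota> a)) * herm_param R a b * y$(\<iota> b))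
        = cmod (herm_param R a b) * (cmod (y$(\<iota> a)) * cmod (y$(\<iota> b)))"
      by (simp add: norm_mult)
    also have "\<dots> \<le> cmod (herm_param R a b) * q"
      by (rule mult_left_mono[OF pair]) simp
    finally show "cmod (cnj (y$(\<iota> a)) * herm_param R a b * y$(\<iota> b)) \<le> cmod (herm_param R a b) * q" .
  qed
  also have "\<dots> = (\<Sum>a\<in>UNIV. \<Sum>b\<in>UNIV. cmod (herm_param R a b)) * q"
    by (simp add: sum_distrib_right)
  finally show ?thesis by (simp add: q_def)
qed

definition herm_code :: "complex^'n^'n \<Rightarrow> real^('n\<times>'n)" where
  "herm_code M = (\<chi> ab. Re (M $ fst ab $ snd ab) + Im (M $ fst ab $ snd ab))"

lemma herm_code_add: "herm_code (M + N) = herm_code M + herm_code N"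
  and herm_code_scale: "herm_code (r *\<^sub>R M) = r *\<^sub>R herm_code M"
  by (simp_all add: vec_eq_iff herm_code_def scaleR_complex algebra_simps)

lemma herm_code_eq_zero: assumes h: "hermitian M" and z: "herm_code M = 0" shows "M = 0"
proof -
  have "M$a$b = 0" for a b
  proof -
    have "Re (M$a$b) + Im (M$a$b) = 0" "Re (M$b$a) + Im (M$b$a) = 0"
      using z by (auto simp: herm_code_def vec_eq_iff dest: spec[of _ "(a,b)"] spec[of _ "(b,a)"])
    moreover have "M$b$a = cnj (M$a$b)" using h unfolding hermitian_def by blast
    ultimately show ?thesis by (simp add: complex_eq_iff)
  qed
  thus ?thesis by (simp add: vec_eq_iff)
qed

text \<open>The dimension count: if D in Gamma(n) has k independent rows with k^2 > 2 n^2,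
  the real-linear map \<open>R \<mapsto> (ptr1 (D K D), ptr2 (D K D))\<close> from a k^2-dimensional
  space to a \<open>2 n^2\<close>-dimensional one has a nonzero kernel element, which is an admissible
  perturbation of D.\<close>
lemma not_extreme_if_rank_large:
  fixes D :: "complex^('n::finite\<times>'n)^('n\<times>'n)"
  assumes G: "D \<in> Gamma" and rank: "CARD('k::finite) \<le> rank D"
    and dim: "2 * CARD('n)^2 < CARD('k)^2"
  shows "\<not> D extreme_point_of Gamma"
proof -
  have h: "hermitian D" and psd: "\<And>x. 0 \<le> Re (sesq D x x)" and tr: "trace D = 1"
    using G by (auto simp: Gamma_iff density_matrix_iff)
  obtain \<iota> :: "'k \<Rightarrow> 'n\<times>'n" where ind: "independent_rows D \<iota>"
    using independent_rows_of_rank[OF rank] by blast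
  define T :: "real^('k\<times>'k) \<Rightarrow> (real^('n\<times>'n)) \<times> (real^('n\<times>'n))"
    where "T R = (herm_code (ptr1 (sandwich D \<iota> R)), herm_code (ptr2 (sandwich D \<iota> R)))" for R
  have lin: "linear T"
    by (rule linearI) (simp_all add: T_def sandwich_add sandwich_scale ptr1_add ptr1_scale
        ptr2_add ptr2_scale herm_code_add herm_code_scale)
  have "\<not> inj T"
  proof
    assume "inj T"
    hence "dim (range T) = dim (UNIV :: (real^('k\<times>'k)) set)"
      by (intro dim_image_eq[OF lin]) (auto simp: inj_def)
    hence "dim (range T) = CARD('k)^2" by (simp add: power2_eq_square)
    moreover have "dim (range T) \<le> DIM((real^('n\<times>'n)) \<times> (real^('n\<times>'n)))"
      by (rule dim_subset_UNIV)
    ultimately show False using dim by (simp add: power2_eq_square)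
  qed
  then obtain R1 R2 where "T R1 = T R2" and "R1 \<noteq> R2" by (auto simp: inj_def)
  hence R: "R1 - R2 \<noteq> 0" "T (R1 - R2) = 0" by (simp_all add: linear_diff[OF lin])
  define H where "H = sandwich D \<iota> (R1 - R2)"
  have hH: "hermitian H" unfolding H_def by (rule hermitian_sandwich[OF h])
  show ?thesis
  proof (rule not_extreme_if_perturbable[OF G hH])
    show "H \<noteq> 0" using sandwich_eq_zero[OF h ind, of "R1 - R2"] R(1) unfolding H_def by blast
    show "ptr1 H = 0" "ptr2 H = 0"
      using R(2) herm_code_eq_zero[OF hermitian_ptr1[OF hH]] herm_code_eq_zero[OF hermitian_ptr2[OF hH]]
      by (simp_all add: T_def H_def zero_prod_def)
    show "cmod (sesq H x x) \<le> (\<Sum>a\<in>UNIV. \<Sum>b\<in>UNIV. cmod (herm_param (R1 - R2) a b)) * Re (sesq D x x)"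
      for x unfolding H_def by (rule sandwich_dominated[OF h psd tr])
  qed (intro sum_nonneg, simp)
qed

subsection \<open>An extreme point of Gamma(3) of rank 4\<close>

definition outer :: "('m::finite \<Rightarrow> complex) \<Rightarrow> complex^'m^'m" where
  "outer w = (\<chi> p q. w p * cnj (w q))"

lemma sesq_outer: "sesq (outer w) x x = of_real ((cmod (\<Sum>q\<in>UNIV. cnj (w q) * x$q))^2)"
proof -
  define S where "S = (\<Sum>q\<in>UNIV. cnj (w q) * x$q)"
  have "sesq (outer w) x x = cnj S * S"
    by (simp add: S_def sesq_def outer_def sum_product mult_ac)
  also have "\<dots> = of_real ((cmod S)^2)"
    using complex_norm_square[of S] by (simp only: mult.commute)
  finally show ?thesis by (simp add: S_def)
qed

lemma hermitian_outer: "hermitian (outer w)"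
  by (simp add: hermitian_def outer_def)

definition w1 :: "3\<times>3 \<Rightarrow> complex" where "w1 p = (if p = (1,3) then -1 else if p = (2,2) then 1 else 0)"
definition w2 :: "3\<times>3 \<Rightarrow> complex" where "w2 p = (if p = (1,1) then 1 else if p = (3,3) then 1 else 0)"
definition w3 :: "3\<times>3 \<Rightarrow> complex" where "w3 p = (if p = (2,1) then 1 else 0)"
definition w4 :: "3\<times>3 \<Rightarrow> complex" where
  "w4 p = (if p = (1,1) then 1 else if p = (2,3) then -1 else if p = (3,2) then -2 else 0)"

definition Dex :: "complex^(3\<times>3)^(3\<times>3)" where
  "Dex = (1/7) *\<^sub>R outer w1 + (1/7) *\<^sub>R outer w2 + (1/7) *\<^sub>R outer w3 + (1/21) *\<^sub>R outer w4"

lemma Dex_entry: "Dex $ p $ q = of_real (1/7) * (w1 p * cnj (w1 q) + w2 p * cnj (w2 q) + w3 p * cnj (w3 q))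
   + of_real (1/21) * (w4 p * cnj (w4 q))"
  by (simp add: Dex_def outer_def scaleR_complex algebra_simps)

lemmas Dex_simps = Dex_entry w1_def w2_def w3_def w4_def

lemma sum_3x3: "(\<Sum>p\<in>(UNIV::(3\<times>3) set). f p) =
    f (1,1) + f (1,2) + f (1,3) + f (2,1) + f (2,2) + f (2,3) + f (3,1) + f (3,2) + f (3,3)"
  by (simp add: sum_pairs sum_3 add.assoc)

lemma Dex_hermitian: "hermitian Dex"
  unfolding Dex_def by (intro hermitian_add hermitian_scaleR hermitian_outer)

lemma Dex_psd: "0 \<le> Re (sesq Dex x x)"
  unfolding Dex_def by (simp add: sesq_add_matrix sesq_scale_matrix sesq_outer)

lemma Dex_trace: "trace Dex = 1"
  by (simp add: trace_def sum_3x3 Dex_simps)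

lemma Dex_ptr: "ptr1 Dex = mat (1 / of_nat CARD(3))" "ptr2 Dex = mat (1 / of_nat CARD(3))"
proof -
  have "ptr1 Dex $ a $ b = mat (1 / of_nat CARD(3)) $ a $ b"
    and "ptr2 Dex $ a $ b = mat (1 / of_nat CARD(3)) $ a $ b" for a b :: 3
    using exhaust_3[of a] exhaust_3[of b]
    by (auto simp: ptr1_def ptr2_def mat_def sum_3 Dex_simps)
  thus "ptr1 Dex = mat (1 / of_nat CARD(3))" "ptr2 Dex = mat (1 / of_nat CARD(3))"
    by (simp_all add: vec_eq_iff)
qed

lemma Dex_in_Gamma: "Dex \<in> Gamma"
  using Dex_hermitian Dex_psd Dex_trace Dex_ptr by (simp add: Gamma_iff density_matrix_iff)

text \<open>Five vectors spanning the kernel of Dex: the unit vectors at (1,2) and (3,1)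
  and the following three.\<close>
definition v3 :: "complex^(3\<times>3)" where "v3 = (\<chi> p. if p = (1,3) \<or> p = (2,2) then 1 else 0)"
definition v4 :: "complex^(3\<times>3)" where "v4 = (\<chi> p. if p = (2,3) then -2 else if p = (3,2) then 1 else 0)"
definition v5 :: "complex^(3\<times>3)" where
  "v5 = (\<chi> p. if p = (1,1) then -1 else if p = (2,3) then -1 else if p = (3,3) then 1 else 0)"

definition Dex_kernel :: "(complex^(3\<times>3)) set" where
  "Dex_kernel = {axis (1,2) 1, axis (3,1) 1, v3, v4, v5}"

lemma Dex_kernel: "v \<in> Dex_kernel \<Longrightarrow> Dex *v v = 0"
proof -
  have "Dex *v axis (1,2) 1 = 0" "Dex *v axis (3,1) 1 = 0"
    by (simp_all add: vec_eq_iff mult_axis Dex_simps)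
  moreover have "Dex *v v3 = 0" "Dex *v v4 = 0" "Dex *v v5 = 0"
    by (simp_all add: vec_eq_iff matrix_vector_mult_def sum_3x3 v3_def v4_def v5_def Dex_simps)
  ultimately show "v \<in> Dex_kernel \<Longrightarrow> Dex *v v = 0" by (auto simp: Dex_kernel_def)
qed

text \<open>Killing the kernel (on both sides, by hermiticity) leaves only the
  entries indexed by (1,1), (2,1), (2,2), (2,3); the 18 partial-trace equations then
  form a homogeneous linear system with only the trivial solution.\<close>
lemma Dex_rigid:
  fixes H :: "complex^(3\<times>3)^(3\<times>3)"
  assumes h: "hermitian H" and ker: "\<And>v. v \<in> Dex_kernel \<Longrightarrow> H *v v = 0"
    and p1: "ptr1 H = 0" and p2: "ptr2 H = 0"
  shows "H = 0"
proof -
  have k: "H *v axis (1,2) 1 = 0" "H *v axis (3,1) 1 = 0" "H *v v3 = 0" "H *v v4 = 0" "H *v v5 = 0"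
    by (simp_all add: ker Dex_kernel_def)
  have c1: "H$p$(1,2) = 0" and c2: "H$p$(3,1) = 0" for p
    using k(1,2)[THEN arg_cong[where f="\<lambda>v. v$p"]] by (simp_all add: mult_axis)
  have c3: "H$p$(1,3) = - H$p$(2,2)" and c4: "H$p$(3,2) = 2 * H$p$(2,3)"
    and c5: "H$p$(3,3) = H$p$(1,1) + H$p$(2,3)" for p
    using k(3-5)[THEN arg_cong[where f="\<lambda>v. v$p"]]
    by (simp_all add: matrix_vector_mult_def sum_3x3 v3_def v4_def v5_def add_eq_0_iff algebra_simps)
  have r1: "H$(1,2)$q = 0" and r2: "H$(3,1)$q = 0" and r3: "H$(1,3)$q = - H$(2,2)$q"
    and r4: "H$(3,2)$q = 2 * H$(2,3)$q" and r5: "H$(3,3)$q = H$(1,1)$q + H$(2,3)$q" for q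
    using k[THEN hermitian_left_kernel[OF h], of q]
    by (simp_all add: sum_3x3 axis_def v3_def v4_def v5_def add_eq_0_iff algebra_simps)
  note reduce = c1 c2 c3 c4 c5 r1 r2 r3 r4 r5
  have P1: "H$(a,1)$(b,1) + H$(a,2)$(b,2) + H$(a,3)$(b,3) = 0" for a b
    using arg_cong[OF p1, of "\<lambda>M. M$a$b"] by (simp add: ptr1_def sum_3)
  have P2: "H$(1,a)$(1,b) + H$(2,a)$(2,b) + H$(3,a)$(3,b) = 0" for a b
    using arg_cong[OF p2, of "\<lambda>M. M$a$b"] by (simp add: ptr2_def sum_3)
  note system = P1[of 1 1] P1[of 1 2] P1[of 1 3] P1[of 2 1] P1[of 2 2] P1[of 2 3]
    P1[of 3 1] P1[of 3 2] P1[of 3 3] P2[of 1 1] P2[of 1 2] P2[of 1 3] P2[of 2 1] P2[of 2 2]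
    P2[of 2 3] P2[of 3 1] P2[of 3 2] P2[of 3 3]
  have block: "H$(1,1)$(1,1) = 0" "H$(1,1)$(2,1) = 0" "H$(1,1)$(2,2) = 0" "H$(1,1)$(2,3) = 0"
    "H$(2,1)$(1,1) = 0" "H$(2,1)$(2,1) = 0" "H$(2,1)$(2,2) = 0" "H$(2,1)$(2,3) = 0"
    "H$(2,2)$(1,1) = 0" "H$(2,2)$(2,1) = 0" "H$(2,2)$(2,2) = 0" "H$(2,2)$(2,3) = 0"
    "H$(2,3)$(1,1) = 0" "H$(2,3)$(2,1) = 0" "H$(2,3)$(2,2) = 0" "H$(2,3)$(2,3) = 0"
    by (insert system[simplified reduce]) (algebra+)
  have "H$(a,b)$(c,d) = 0" for a b c d :: 3
    using exhaust_3[of a] exhaust_3[of b] exhaust_3[of c] exhaust_3[of d]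
    by (elim disjE) (simp_all add: reduce block)
  thus ?thesis by (simp add: vec_eq_iff)
qed

lemma Dex_extreme: "Dex extreme_point_of Gamma"
  using Dex_in_Gamma Dex_kernel Dex_rigid by (rule extreme_if_rigid)

lemma Dex_rank: "4 \<le> rank Dex"
proof -
  define \<iota> :: "4 \<Rightarrow> 3\<times>3" where
    "\<iota> a = (if a = 1 then (1,1) else if a = 2 then (1,3) else if a = 3 then (2,1) else (2,3))" for a
  have "independent_rows Dex \<iota>"
    unfolding independent_rows_def
  proof (rule allI, rule impI)
    fix c :: "4 \<Rightarrow> complex"
    assume sum0: "(\<Sum>a\<in>UNIV. c a *s row (\<iota> a) Dex) = 0"
    have e: "(\<Sum>a\<in>UNIV. c a * Dex $ \<iota> a $ j) = 0" for j
      using arg_cong[OF sum0, of "\<lambda>v. v$j"] by (simp add: row_def)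
    have "c 1 = 0" "c 2 = 0" "c 3 = 0" "c 4 = 0"
      using e[of "(3,3)"] e[of "(1,3)"] e[of "(2,1)"] e[of "(2,3)"]
      by (simp_all add: sum_4 \<iota>_def Dex_simps)
    thus "\<forall>a. c a = 0" by (metis exhaust_4)
  qed
  thus ?thesis using rank_ge_of_independent_rows by fastforce
qed

text \<open>MR(3) = 4: by the dimension count (25 > 2 * 9) every extreme point of Gamma(3) has
  rank at most 4, and Dex is an extreme point of rank 4.\<close>
theorem theorem2p5:
  shows "(\<forall>D. D extreme_point_of (Gamma :: (complex^(3\<times>3)^(3\<times>3)) set) \<longrightarrow> rank D \<le> 4) \<and>
         (\<exists>D. D extreme_point_of (Gamma :: (complex^(3\<times>3)^(3\<times>3)) set) \<and> rank D = 4)"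
proof
  show upper: "\<forall>D. D extreme_point_of (Gamma :: (complex^(3\<times>3)^(3\<times>3)) set) \<longrightarrow> rank D \<le> 4"
  proof (intro allI impI)
    fix D :: "complex^(3\<times>3)^(3\<times>3)"
    assume ext: "D extreme_point_of Gamma"
    show "rank D \<le> 4"
    proof (rule ccontr)
      assume "\<not> rank D \<le> 4"
      hence "CARD(5) \<le> rank D" by simp
      moreover have "2 * CARD(3)^2 < CARD(5)^2" by simp
      moreover have "D \<in> Gamma" using ext by (simp add: extreme_point_of_def)
      ultimately show False
        using not_extreme_if_rank_large[where 'k = 5] ext by blast
    qed
  qed
  show "\<exists>D. D extreme_point_of (Gamma :: (complex^(3\<times>3)^(3\<times>3)) set) \<and> rank D = 4"
    using Dex_extreme Dex_rank upper by (intro exI[of _ Dex]) (auto intro: antisym)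
qed

end
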